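(* Let $\beta\in(0,1)$, $\kappa>0$, and consider the uniform mesh $t_j=j\kappa$, $j=0,1,2,\dots$. Let $\Pi_1$ denote continuous piecewise linear interpolation at the nodes $t_j$ (i.e. $\Pi_1 v(t_j)=v(t_j)$ and $\Pi_1 v$ is linear on each $[t_j,t_{j+1}]$). Then there exists a constant $C$ depending only on $\beta$ such that for all $n\geq1$ \[ \int_0^{t_{n+1}}(t_{n+1}-\tau)^{\beta-1}\left|\Pi_1\tau^{1-\beta}-\tau^{1-\beta}\right|\,d\tau\leq C\kappa^{2-\beta}(t_{n+1}-\kappa)^{\beta-1}, \] where $\Pi_1\tau^{1-\beta}$ denotes the interpolant of the function $\tau\mapsto\tau^{1-\beta}$. *)

theory Defs
  imports "HOL-Analysis.Analysis"
begin

definition pl_interp :: "real \<Rightarrow> (real \<Rightarrow> real) \<Rightarrow> real \<Rightarrow> real" where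
  "pl_interp \<kappa> v \<tau> =
     (let j = real_of_int \<lfloor>\<tau> / \<kappa>\<rfloor>;
          a = j * \<kappa>; b = (j + 1) * \<kappa>
      in v a + (\<tau> - a) / \<kappa> * (v b - v a))"

end

theory Submission imports Defs begin

(* The interpolation error of s powr (1 - beta) is at most kappa powr (1 - beta) on the first cell
   and, by concavity, of order kappa^2 a powr (-1 - beta) on a later cell [a, a + kappa]; both are
   bounded by 9 kappa^2 (t + kappa) powr (-1 - beta). Put T = t_{n+1} and split [0, T] at T/2: on
   the left half the kernel (T - t) powr (beta - 1) is at most (T/2) powr (beta - 1) and the error
   integrates to O(kappa powr (2 - beta)); on the right half the error is O(kappa^2 T powr (-1 - beta))
   and the kernel integrates to T powr beta / beta. Since n \<ge> 1, T - kappa \<ge> T/2, so both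
   contributions are O(kappa powr (2 - beta) (T - kappa) powr (beta - 1)). *)

lemma powr_le_tangent:
  fixes p x y :: real
  assumes p: "0 \<le> p" "p \<le> 1" and x: "0 \<le> x" and y: "0 < y"
  shows "x powr p \<le> y powr p + p * y powr (p - 1) * (x - y)"
proof (cases "x = 0")
  case True
  have "y powr (p - 1) * y = y powr p" using y by (simp add: powr_diff)
  then have "p * y powr (p - 1) * (x - y) = - p * y powr p" using True by (simp add: algebra_simps)
  moreover have "p * y powr p \<le> 1 * y powr p" using p by (intro mult_right_mono) auto
  moreover have "x powr p = 0" using True by simp
  ultimately show ?thesis by linarith
next
  case False
  with x have "0 < x" by simp
  have "(x / y) powr p * 1 powr (1 - p) \<le> p * (x / y) + (1 - p) * 1"
    by (rule Youngs_inequality_0) (use p \<open>0 < x\<close> y in auto)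
  then have "x powr p / y powr p \<le> p * (x / y) + (1 - p)"
    using \<open>0 < x\<close> y by (simp add: powr_divide)
  then have "x powr p \<le> (p * (x / y) + (1 - p)) * y powr p"
    using y by (simp add: divide_le_eq)
  also have "\<dots> = y powr p + p * (y powr p / y) * (x - y)"
    using y by (simp add: field_simps)
  also have "y powr p / y = y powr (p - 1)" using y by (simp add: powr_diff)
  finally show ?thesis .
qed

lemma tangent_le_powr:
  fixes p x y :: real
  assumes p: "p \<le> 0" and x: "0 < x" and y: "0 < y"
  shows "y powr p + p * y powr (p - 1) * (x - y) \<le> x powr p"
proof -
  define u where "u = x / y"
  have u: "0 < u" using x y by (simp add: u_def)
  \<comment> \<open>Young's inequality with weights 1/(1 - p) and -p/(1 - p), applied to u powr p and u\<close>
  have "(u powr p) powr (1 / (1 - p)) * u powr (- p / (1 - p))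
          \<le> (1 / (1 - p)) * u powr p + (- p / (1 - p)) * u"
    by (rule Youngs_inequality_0) (use p u in \<open>auto simp: field_simps\<close>)
  moreover have "(u powr p) powr (1 / (1 - p)) * u powr (- p / (1 - p)) = 1"
    using u p by (simp add: powr_powr diff_divide_distrib flip: powr_add)
  ultimately have "1 \<le> (u powr p - p * u) / (1 - p)"
    by (simp add: add_divide_distrib diff_divide_distrib)
  then have bernoulli: "1 + p * (u - 1) \<le> u powr p"
    using p by (simp add: le_divide_eq algebra_simps)
  have "y powr p * (1 + p * (u - 1)) \<le> y powr p * u powr p"
    using bernoulli y by simp
  also have "y powr p * u powr p = x powr p"
    using x y by (simp add: u_def powr_divide)
  also have "y powr p * (1 + p * (u - 1)) = y powr p + p * (y powr p / y) * (x - y)"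
    using y by (simp add: u_def field_simps)
  also have "y powr p / y = y powr (p - 1)" using y by (simp add: powr_diff)
  finally show ?thesis .
qed

lemma powr_chord_error:
  fixes p a k t :: real
  assumes p: "0 \<le> p" "p \<le> 1" and a: "0 < a" and k: "0 < k" and t: "a \<le> t" "t \<le> a + k"
  defines "L \<equiv> a powr p + (t - a) / k * ((a + k) powr p - a powr p)"
  shows "L \<le> t powr p" and "t powr p - L \<le> p * (1 - p) * k\<^sup>2 * a powr (p - 2)"
proof -
  have t0: "0 < t" using a t by simp
  have kL: "k * L = (a + k - t) * a powr p + (t - a) * (a + k) powr p"
    using k by (simp add: L_def field_simps)
  \<comment> \<open>the chord is a convex combination of the tangent at t evaluated at both endpoints\<close>
  define D where "D = p * t powr (p - 1)"
  have "(a + k - t) * a powr p \<le> (a + k - t) * (t powr p + D * (a - t))"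
    using powr_le_tangent[of p a t] p a t0 t by (intro mult_left_mono) (auto simp: D_def)
  moreover have "(t - a) * (a + k) powr p \<le> (t - a) * (t powr p + D * (a + k - t))"
    using powr_le_tangent[of p "a + k" t] p a k t0 t by (intro mult_left_mono) (auto simp: D_def)
  moreover have "(a + k - t) * (t powr p + D * (a - t)) + (t - a) * (t powr p + D * (a + k - t))
      = k * t powr p"
    by (simp add: algebra_simps)
  ultimately have "k * L \<le> k * t powr p" using kL by linarith
  then show "L \<le> t powr p" using k by simp
  \<comment> \<open>the chord is steeper than the tangent at a + k, whose slope differs from the one at a
    by O(k a powr (p - 2)) by convexity of s powr (p - 1)\<close>
  have slope: "p * (a + k) powr (p - 1) * k \<le> (a + k) powr p - a powr p"
    using powr_le_tangent[of p a "a + k"] p a k by (simp add: algebra_simps)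
  have "(t - a) / k * (p * (a + k) powr (p - 1) * k) \<le> (t - a) / k * ((a + k) powr p - a powr p)"
    using slope t k by (intro mult_left_mono) auto
  then have L_ge: "a powr p + (t - a) * p * (a + k) powr (p - 1) \<le> L"
    using k by (simp add: L_def)
  have decay: "a powr (p - 1) - (a + k) powr (p - 1) \<le> (1 - p) * a powr (p - 2) * k"
    using tangent_le_powr[of "p - 1" "a + k" a] p a k by (simp add: algebra_simps)
  have "t powr p - L \<le> (t - a) * p * (a powr (p - 1) - (a + k) powr (p - 1))"
    using powr_le_tangent[of p t a] L_ge p a t by (simp add: algebra_simps)
  also have "\<dots> \<le> (t - a) * p * ((1 - p) * a powr (p - 2) * k)"
    using decay p t by (intro mult_left_mono) auto
  also have "\<dots> \<le> k * p * ((1 - p) * a powr (p - 2) * k)"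
    using p t by (intro mult_right_mono mult_left_mono) auto
  finally show "t powr p - L \<le> p * (1 - p) * k\<^sup>2 * a powr (p - 2)"
    by (simp add: power2_eq_square algebra_simps)
qed

lemma powr_nonpos_le_scaled:
  fixes x y m e :: real
  assumes x: "0 < x" and xy: "x \<le> m * y" and m: "1 \<le> m" and e: "-2 \<le> e" "e \<le> 0"
  shows "y powr e \<le> m\<^sup>2 * x powr e"
proof -
  have "x / m \<le> y" using xy m by (simp add: divide_le_eq mult.commute)
  then have "y powr e \<le> (x / m) powr e"
    using x m e by (intro powr_mono2') auto
  also have "\<dots> = m powr (- e) * x powr e"
    using x m by (simp add: powr_divide powr_minus_divide)
  also have "m powr (- e) \<le> m powr 2"
    using m e by (intro powr_mono) auto
  then have "m powr (- e) * x powr e \<le> m\<^sup>2 * x powr e"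
    using m by (intro mult_right_mono) auto
  finally show ?thesis .
qed

lemma pl_interp_on_cell:
  assumes k: "0 < k" and t: "of_int j * k \<le> t" "t < (of_int j + 1) * k"
  shows "pl_interp k v t
    = v (of_int j * k) + (t - of_int j * k) / k * (v ((of_int j + 1) * k) - v (of_int j * k))"
proof -
  have "\<lfloor>t / k\<rfloor> = j"
    using t k by (intro floor_unique) (simp_all add: le_divide_eq divide_less_eq)
  then show ?thesis by (simp add: pl_interp_def Let_def)
qed

lemma pl_interp_powr_error:
  fixes k c t :: real
  assumes k: "0 < k" and c: "0 < c" "c < 1" and t: "0 \<le> t"
  shows "\<bar>pl_interp k (\<lambda>s. s powr (1 - c)) t - t powr (1 - c)\<bar> \<le> 9 * k\<^sup>2 * (t + k) powr (-1 - c)"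
proof -
  define j where "j = \<lfloor>t / k\<rfloor>"
  define a where "a = of_int j * k"
  have "of_int j \<le> t / k" "t / k < of_int j + 1"
    unfolding j_def by linarith+
  then have at: "a \<le> t" and ta: "t < a + k"
    using k by (simp_all add: a_def le_divide_eq divide_less_eq algebra_simps)
  have interp: "pl_interp k (\<lambda>s. s powr (1 - c)) t
      = a powr (1 - c) + (t - a) / k * ((a + k) powr (1 - c) - a powr (1 - c))"
    using pl_interp_on_cell[of k j t] k at ta by (simp add: a_def algebra_simps)
  show ?thesis
  proof (cases "j = 0")
    case True
    then have "a = 0" by (simp add: a_def)
    then have "pl_interp k (\<lambda>s. s powr (1 - c)) t = t / k * k powr (1 - c)"
      using interp by simp
    moreover have "0 \<le> t / k * k powr (1 - c)" using t k by simp
    moreover have "t / k * k powr (1 - c) \<le> k powr (1 - c)"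
      by (rule mult_left_le_one_le) (use \<open>a = 0\<close> ta t k in auto)
    moreover have "t powr (1 - c) \<le> k powr (1 - c)"
      using \<open>a = 0\<close> ta t c by (intro powr_mono2) auto
    ultimately have "\<bar>pl_interp k (\<lambda>s. s powr (1 - c)) t - t powr (1 - c)\<bar> \<le> k powr (1 - c)"
      unfolding abs_le_iff using powr_ge_zero[of t "1 - c"] by linarith
    also have "k powr (1 - c) = k\<^sup>2 * k powr (-1 - c)"
      using powr_add[of k 2 "-1 - c"] k by simp
    also have "k powr (-1 - c) \<le> 2\<^sup>2 * (t + k) powr (-1 - c)"
      using \<open>a = 0\<close> ta t k c by (intro powr_nonpos_le_scaled) auto
    finally show ?thesis using k by (simp add: mult_left_mono)
  next
    case False
    moreover have "0 \<le> j" using t k by (simp add: j_def)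
    ultimately have "1 * k \<le> a" unfolding a_def using k by (intro mult_right_mono) auto
    then have "k \<le> a" by simp
    have "1 - c - 2 = -1 - c" by simp
    then have "\<bar>pl_interp k (\<lambda>s. s powr (1 - c)) t - t powr (1 - c)\<bar>
        \<le> (1 - c) * c * k\<^sup>2 * a powr (-1 - c)"
      using powr_chord_error[of "1 - c" a k t] interp c k \<open>k \<le> a\<close> at ta by auto
    also have "\<dots> \<le> 1 * k\<^sup>2 * a powr (-1 - c)"
      using c mult_le_one[of "1 - c" c] by (intro mult_right_mono) auto
    also have "a powr (-1 - c) \<le> 3\<^sup>2 * (t + k) powr (-1 - c)"
      using \<open>k \<le> a\<close> ta t k c by (intro powr_nonpos_le_scaled) auto
    finally show ?thesis by (simp add: mult_left_mono)
  qed
qed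

lemma has_integral_powr_shifted:
  fixes k c T :: real
  assumes k: "0 < k" and c: "0 < c" and T: "0 \<le> T"
  shows "((\<lambda>x. (x + k) powr (-1 - c)) has_integral (k powr (- c) - (T + k) powr (- c)) / c) {0..T}"
proof -
  define G where "G x = - ((x + k) powr (- c)) / c" for x :: real
  have "((\<lambda>x. (x + k) powr (-1 - c)) has_integral (G T - G 0)) {0..T}"
  proof (rule fundamental_theorem_of_calculus)
    fix x assume "x \<in> {0..T}"
    then have "0 < x + k" using k by simp
    have "(G has_real_derivative - (- c * (x + k) powr (- c - of_nat 1) * (1 + 0)) / c) (at x)"
      unfolding G_def by (intro derivative_eq_intros DERIV_fun_powr) (use \<open>0 < x + k\<close> c in auto)
    moreover have "(x + k) powr (- c - 1) = (x + k) powr (-1 - c)"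
      by (rule arg_cong[where f = "\<lambda>e. (x + k) powr e"]) simp
    ultimately have "(G has_real_derivative (x + k) powr (-1 - c)) (at x)"
      using c by simp
    then show "(G has_vector_derivative (x + k) powr (-1 - c)) (at x within {0..T})"
      by (simp add: has_real_derivative_iff_has_vector_derivative has_vector_derivative_at_within)
  qed (use T in auto)
  then show ?thesis by (simp add: G_def diff_divide_distrib)
qed

lemma has_integral_powr_reflected:
  fixes c T :: real
  assumes c: "0 < c" and T: "0 \<le> T"
  shows "((\<lambda>x. (T - x) powr (c - 1)) has_integral T powr c / c) {0..T}"
proof -
  have "((\<lambda>x. x powr (c - 1)) has_integral T powr c / c) {0..T}"
    using has_integral_powr_from_0[of "c - 1" T] c T by simp
  then have "(((\<lambda>x. x powr (c - 1)) \<circ> (+) T) has_integral T powr c / c) {-T..0}"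
    by (subst has_integral_shift_Icc_real) simp
  then show ?thesis
    using has_integral_reflect_real[of "(\<lambda>x. x powr (c - 1)) \<circ> (+) T" _ 0 "-T"] by (simp add: o_def)
qed

lemma inverse_le_powr_mult:
  fixes k D T c :: real
  assumes k: "0 < k" "k \<le> D" and DT: "D \<le> T" and c: "0 \<le> c"
  shows "1 / T \<le> k powr (- c) * D powr (c - 1)"
proof -
  have "1 / T \<le> 1 / D" using k DT by (simp add: frac_le)
  also have "1 / D = k powr (- c) * k powr c / D" using k by (simp add: powr_minus)
  also have "\<dots> \<le> k powr (- c) * D powr c / D"
    using k c by (intro divide_right_mono mult_left_mono powr_mono2) auto
  also have "\<dots> = k powr (- c) * D powr (c - 1)" using k by (simp add: powr_diff)
  finally show ?thesis .
qed

lemma mult_le_add_if_le_either: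
  fixes g e A B :: real
  assumes "g \<le> A \<or> e \<le> B" and "0 \<le> g" "0 \<le> e" "0 \<le> A" "0 \<le> B"
  shows "g * e \<le> A * e + B * g"
  using assms(1)
proof
  assume "g \<le> A"
  then have "g * e \<le> A * e" using assms by (intro mult_right_mono)
  then show ?thesis using assms by (simp add: add_increasing2)
next
  assume "e \<le> B"
  then have "g * e \<le> B * g" using mult_left_mono[of e B g] assms by (simp add: mult.commute)
  then show ?thesis using assms by (simp add: add_increasing)
qed

lemma weakly_singular_integral_le:
  fixes E :: "real \<Rightarrow> real" and c k T M :: real
  assumes c: "0 < c" "c < 1" and k: "0 < k" and T: "2 * k \<le> T"
    and E_meas: "E \<in> borel_measurable borel"
    and E_le: "\<And>x. 0 \<le> x \<Longrightarrow> \<bar>E x\<bar> \<le> M * (x + k) powr (-1 - c)"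
  defines "F \<equiv> \<lambda>x. (T - x) powr (c - 1) * E x"
  shows "F integrable_on {0..T}"
    and "integral {0..T} F \<le> 8 / c * M * k powr (- c) * (T - k) powr (c - 1)"
proof -
  have "0 \<le> M * k powr (-1 - c)" using E_le[of 0] by simp
  then have M: "0 \<le> M" using k by (simp add: zero_le_mult_iff)
  define K where "K = k powr (- c) * (T - k) powr (c - 1)"
  define A where "A = (T / 2) powr (c - 1)"
  define B where "B = M * (T / 2 + k) powr (-1 - c)"
  define H where "H x = A * (M * (x + k) powr (-1 - c)) + B * (T - x) powr (c - 1)" for x
  define IH where "IH = A * (M * ((k powr (- c) - (T + k) powr (- c)) / c)) + B * (T powr c / c)"
  have A_nonneg: "0 \<le> A" and B_nonneg: "0 \<le> B" using M by (simp_all add: A_def B_def)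
  have H_int: "(H has_integral IH) {0..T}"
    unfolding H_def IH_def using k c T
    by (intro has_integral_add has_integral_mult_right has_integral_powr_shifted
        has_integral_powr_reflected) auto
  \<comment> \<open>the kernel is at most A left of T/2, the error bound at most B right of it\<close>
  have F_le_H: "\<bar>F x\<bar> \<le> H x" if x: "x \<in> {0..T}" for x
  proof -
    have kernel: "0 \<le> (T - x) powr (c - 1)" and err: "0 \<le> M * (x + k) powr (-1 - c)"
      using M by simp_all
    have "\<bar>F x\<bar> \<le> (T - x) powr (c - 1) * (M * (x + k) powr (-1 - c))"
      using E_le[of x] x by (simp add: F_def abs_mult mult_left_mono)
    moreover have "(T - x) powr (c - 1) \<le> A \<or> M * (x + k) powr (-1 - c) \<le> B"
      using x k c M by (cases "x \<le> T / 2") (auto simp: A_def B_def intro!: powr_mono2' mult_left_mono)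
    then have "(T - x) powr (c - 1) * (M * (x + k) powr (-1 - c)) \<le> H x"
      unfolding H_def using kernel err A_nonneg B_nonneg by (rule mult_le_add_if_le_either)
    ultimately show ?thesis by linarith
  qed
  have "F \<in> borel_measurable (lebesgue_on {0..T})"
    using E_meas unfolding F_def by (simp add: measurable_completion measurable_restrict_space1)
  then show F_int: "F integrable_on {0..T}"
    by (rule measurable_bounded_by_integrable_imp_integrable_real[OF _ _ F_le_H])
      (use H_int in auto)
  have "integral {0..T} F \<le> IH"
    using integral_le[OF F_int _ abs_le_D1[OF F_le_H]] H_int
    by (simp add: has_integral_integrable integral_unique)
  also have "IH \<le> 8 / c * M * K"
  proof -
    have "(T + k) powr (- c) \<le> k powr (- c)"
      using k T c by (intro powr_mono2') auto
    then have "A * (M * (k powr (- c) - (T + k) powr (- c)))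
        \<le> 2\<^sup>2 * (T - k) powr (c - 1) * (M * k powr (- c))"
      unfolding A_def using k T c M by (intro mult_mono mult_left_mono powr_nonpos_le_scaled) auto
    then have left: "A * (M * (k powr (- c) - (T + k) powr (- c))) \<le> 4 * M * K"
      by (simp add: K_def mult_ac)
    have "B * T powr c \<le> M * (2\<^sup>2 * T powr (-1 - c)) * T powr c"
      unfolding B_def using k T c M by (intro mult_right_mono mult_left_mono powr_nonpos_le_scaled) auto
    also have "\<dots> = 4 * M * (T powr (-1 - c) * T powr c)"
      by (simp add: mult_ac)
    also have "\<dots> = 4 * M * (1 / T)"
      using k T by (simp add: powr_minus_divide flip: powr_add)
    also have "1 / T \<le> K"
      unfolding K_def using k T c by (intro inverse_le_powr_mult) auto
    then have "4 * M * (1 / T) \<le> 4 * M * K"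
      using M by (intro mult_left_mono) auto
    finally have right: "B * T powr c \<le> 4 * M * K" .
    have "IH = (A * (M * (k powr (- c) - (T + k) powr (- c))) + B * T powr c) / c"
      by (simp add: IH_def add_divide_distrib)
    also have "\<dots> \<le> (4 * M * K + 4 * M * K) / c"
      using c by (intro divide_right_mono add_mono left right) simp
    finally show ?thesis by (simp add: mult_ac)
  qed
  finally show "integral {0..T} F \<le> 8 / c * M * k powr (- c) * (T - k) powr (c - 1)"
    by (simp add: K_def mult.assoc)
qed

lemma pl_interp_powr_error_integral_le:
  fixes \<beta> \<kappa> T :: real
  assumes \<beta>: "0 < \<beta>" "\<beta> < 1" and \<kappa>: "0 < \<kappa>" and T: "2 * \<kappa> \<le> T"
  defines "E \<equiv> \<lambda>\<tau>. \<bar>pl_interp \<kappa> (\<lambda>s. s powr (1 - \<beta>)) \<tau> - \<tau> powr (1 - \<beta>)\<bar>"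
  shows "(\<lambda>\<tau>. (T - \<tau>) powr (\<beta> - 1) * E \<tau>) integrable_on {0..T}"
    and "integral {0..T} (\<lambda>\<tau>. (T - \<tau>) powr (\<beta> - 1) * E \<tau>)
           \<le> 72 / \<beta> * \<kappa> powr (2 - \<beta>) * (T - \<kappa>) powr (\<beta> - 1)"
proof -
  have "E \<in> borel_measurable borel"
    unfolding E_def pl_interp_def Let_def by measurable
  moreover have "\<bar>E \<tau>\<bar> \<le> 9 * \<kappa>\<^sup>2 * (\<tau> + \<kappa>) powr (-1 - \<beta>)" if "0 \<le> \<tau>" for \<tau>
    unfolding E_def using pl_interp_powr_error[of \<kappa> \<beta> \<tau>] \<kappa> \<beta> that by simp
  ultimately have bound:
    "(\<lambda>\<tau>. (T - \<tau>) powr (\<beta> - 1) * E \<tau>) integrable_on {0..T}"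
    "integral {0..T} (\<lambda>\<tau>. (T - \<tau>) powr (\<beta> - 1) * E \<tau>)
       \<le> 8 / \<beta> * (9 * \<kappa>\<^sup>2) * \<kappa> powr (- \<beta>) * (T - \<kappa>) powr (\<beta> - 1)"
    using weakly_singular_integral_le[of \<beta> \<kappa> T E "9 * \<kappa>\<^sup>2"] \<beta> \<kappa> T by auto
  have scale: "8 / \<beta> * (9 * \<kappa>\<^sup>2) * \<kappa> powr (- \<beta>) = 72 / \<beta> * \<kappa> powr (2 - \<beta>)"
    using powr_add[of \<kappa> 2 "- \<beta>"] \<kappa> by simp
  show "(\<lambda>\<tau>. (T - \<tau>) powr (\<beta> - 1) * E \<tau>) integrable_on {0..T}"
    by (fact bound(1))
  show "integral {0..T} (\<lambda>\<tau>. (T - \<tau>) powr (\<beta> - 1) * E \<tau>)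
      \<le> 72 / \<beta> * \<kappa> powr (2 - \<beta>) * (T - \<kappa>) powr (\<beta> - 1)"
    using bound(2) unfolding scale .
qed

theorem lemma5p5:
  fixes \<beta> :: real
  assumes "0 < \<beta>" "\<beta> < 1"
  shows "\<exists>C. \<forall>\<kappa>>0. \<forall>n::nat. n \<ge> 1 \<longrightarrow>
    ((\<lambda>\<tau>. (real (n+1) * \<kappa> - \<tau>) powr (\<beta> - 1) *
          \<bar>pl_interp \<kappa> (\<lambda>s. s powr (1 - \<beta>)) \<tau> - \<tau> powr (1 - \<beta>)\<bar>)
       integrable_on {0..real (n+1) * \<kappa>}) \<and>
    integral {0..real (n+1) * \<kappa>}
      (\<lambda>\<tau>. (real (n+1) * \<kappa> - \<tau>) powr (\<beta> - 1) *
          \<bar>pl_interp \<kappa> (\<lambda>s. s powr (1 - \<beta>)) \<tau> - \<tau> powr (1 - \<beta>)\<bar>)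
    \<le> C * \<kappa> powr (2 - \<beta>) * (real (n+1) * \<kappa> - \<kappa>) powr (\<beta> - 1)"
  using assms
  by (intro exI[of _ "72 / \<beta>"] allI impI conjI pl_interp_powr_error_integral_le)
    (auto simp: algebra_simps)

end
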